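(* Assume the setting described in the context, let $\xi\in\mathbb{R}$, let $V\colon\mathbb{R}^{\mathfrak{d}}\to\mathbb{R}$ satisfy $V(\theta)=\|\theta\|^2+|\mathfrak{c}^\theta-2\xi|^2$ for all $\theta\in\mathbb{R}^{\mathfrak{d}}$, and let $\Theta\in C([0,\infty),\mathbb{R}^{\mathfrak{d}})$ satisfy $\Theta_t=\Theta_0-\int_0^t\mathcal{G}(\Theta_s)\,\mathrm{d}s$ for all $t\in[0,\infty)$. Then for all $t\in[0,\infty)$, $$V(\Theta_t)=V(\Theta_0)-8\int_0^t\mathcal{L}(\Theta_s)\,\mathrm{d}s-8\int_0^t\Big[\int_{[\mathscr{a},\mathscr{b}]^d}(f(x)-\xi)(\mathscr{N}^{\Theta_s}(x)-f(x))\,\mu(\mathrm{d}x)\Big]\mathrm{d}s\le V(\Theta_0)+4\int_0^t\Big[\int_{[\mathscr{a},\mathscr{b}]^d}(f(x)-\xi)^2\,\mu(\mathrm{d}x)-\mathcal{L}(\Theta_s)\Big]\mathrm{d}s.$$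
   Context: Setting: $d,H,\mathfrak{d}\in\mathbb{N}$ with $\mathfrak{d}=dH+2H+1$, $\mathscr{a}\in\mathbb{R}$, $\mathscr{b}\in(\mathscr{a},\infty)$, $f\in C([\mathscr{a},\mathscr{b}]^d,\mathbb{R})$. For $\theta=(\theta_1,\dots,\theta_{\mathfrak{d}})\in\mathbb{R}^{\mathfrak{d}}$, $i\in\{1,\dots,H\}$, $j\in\{1,\dots,d\}$ put $\mathfrak{w}^\theta_{i,j}=\theta_{(i-1)d+j}$, $\mathfrak{b}^\theta_i=\theta_{Hd+i}$, $\mathfrak{v}^\theta_i=\theta_{H(d+1)+i}$, $\mathfrak{c}^\theta=\theta_{\mathfrak{d}}$. Let $\mathfrak{R}_r\in C^1(\mathbb{R},\mathbb{R})$, $r\in\mathbb{N}$, satisfy for all $x\in\mathbb{R}$ that $\lim_{r\to\infty}\big(|\mathfrak{R}_r(x)-\max\{x,0\}|+|(\mathfrak{R}_r)'(x)-\mathbb{1}_{(0,\infty)}(x)|\big)=0$ and $\sup_{r\in\mathbb{N}}\sup_{y\in[-|x|,|x|]}|(\mathfrak{R}_r)'(y)|<\infty$. Let $\mu$ be a finite measure on $\mathcal{B}([\mathscr{a},\mathscr{b}]^d)$. For $\theta\in\mathbb{R}^{\mathfrak{d}}$, $x\in\mathbb{R}^d$ let $\mathscr{N}^\theta(x)=\mathfrak{c}^\theta+\sum_{i=1}^H\mathfrak{v}^\theta_i\max\{\mathfrak{b}^\theta_i+\sum_{j=1}^d\mathfrak{w}^\theta_{i,j}x_j,0\}$, $\mathcal{L}(\theta)=\int_{[\mathscr{a},\mathscr{b}]^d}(f(y)-\mathscr{N}^\theta(y))^2\,\mu(\mathrm{d}y)$,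 and for $r\in\mathbb{N}$, $\mathfrak{L}_r(\theta)=\int_{[\mathscr{a},\mathscr{b}]^d}\big(f(y)-\mathfrak{c}^\theta-\sum_{i=1}^H\mathfrak{v}^\theta_i\,\mathfrak{R}_r(\mathfrak{b}^\theta_i+\sum_{j=1}^d\mathfrak{w}^\theta_{i,j}y_j)\big)^2\,\mu(\mathrm{d}y)$. Let $\mathcal{G}\colon\mathbb{R}^{\mathfrak{d}}\to\mathbb{R}^{\mathfrak{d}}$ satisfy $\mathcal{G}(\theta)=\lim_{r\to\infty}(\nabla\mathfrak{L}_r)(\theta)$ for every $\theta$ for which this limit exists ($\mathcal{G}$ is locally bounded and measurable). $\|\cdot\|$ is the Euclidean norm. *)

theory Defs
  imports "HOL-Analysis.Analysis"
begin

text \<open>Parameter vectors theta in R^dd are encoded as functions nat => real,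
  only the coordinates 1..dd being relevant.  Points of [a,b]^d are functions
  nat => real (coordinates 1..d), as in the product measure Pi_M {1..d}.\<close>

definition pdim :: "nat \<Rightarrow> nat \<Rightarrow> nat" where
  "pdim d H = d * H + 2 * H + 1"

definition wt :: "nat \<Rightarrow> (nat \<Rightarrow> real) \<Rightarrow> nat \<Rightarrow> nat \<Rightarrow> real" where
  "wt d \<theta> i j = \<theta> ((i - 1) * d + j)"

definition bt :: "nat \<Rightarrow> nat \<Rightarrow> (nat \<Rightarrow> real) \<Rightarrow> nat \<Rightarrow> real" where
  "bt d H \<theta> i = \<theta> (H * d + i)"

definition vt :: "nat \<Rightarrow> nat \<Rightarrow> (nat \<Rightarrow> real) \<Rightarrow> nat \<Rightarrow> real" where
  "vt d H \<theta> i = \<theta> (H * (d + 1) + i)"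

definition ct :: "nat \<Rightarrow> nat \<Rightarrow> (nat \<Rightarrow> real) \<Rightarrow> real" where
  "ct d H \<theta> = \<theta> (pdim d H)"

definition pnorm :: "nat \<Rightarrow> nat \<Rightarrow> (nat \<Rightarrow> real) \<Rightarrow> real" where
  "pnorm d H \<theta> = sqrt (\<Sum>k = 1..pdim d H. (\<theta> k)\<^sup>2)"

definition NN :: "nat \<Rightarrow> nat \<Rightarrow> (nat \<Rightarrow> real) \<Rightarrow> (nat \<Rightarrow> real) \<Rightarrow> real" where
  "NN d H \<theta> x = ct d H \<theta> +
     (\<Sum>i = 1..H. vt d H \<theta> i * max (bt d H \<theta> i + (\<Sum>j = 1..d. wt d \<theta> i j * x j)) 0)"

definition LL :: "nat \<Rightarrow> nat \<Rightarrow> ((nat \<Rightarrow> real) \<Rightarrow> real) \<Rightarrow> (nat \<Rightarrow> real) measure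
    \<Rightarrow> (nat \<Rightarrow> real) \<Rightarrow> real" where
  "LL d H f \<mu> \<theta> = (\<integral>y. (f y - NN d H \<theta> y)\<^sup>2 \<partial>\<mu>)"

definition LLr :: "nat \<Rightarrow> nat \<Rightarrow> ((nat \<Rightarrow> real) \<Rightarrow> real) \<Rightarrow> (nat \<Rightarrow> real) measure
    \<Rightarrow> (real \<Rightarrow> real) \<Rightarrow> (nat \<Rightarrow> real) \<Rightarrow> real" where
  "LLr d H f \<mu> Rr \<theta> = (\<integral>y. (f y - ct d H \<theta>
     - (\<Sum>i = 1..H. vt d H \<theta> i * Rr (bt d H \<theta> i + (\<Sum>j = 1..d. wt d \<theta> i j * y j))))\<^sup>2 \<partial>\<mu>)"

definition is_gradient :: "nat \<Rightarrow> ((nat \<Rightarrow> real) \<Rightarrow> real) \<Rightarrow> (nat \<Rightarrow> real) \<Rightarrow> (nat \<Rightarrow> real) \<Rightarrow> bool" where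
  "is_gradient n F \<theta> g \<longleftrightarrow>
     (\<forall>k\<in>{1..n}. ((\<lambda>h. F (\<theta>(k := \<theta> k + h))) has_real_derivative g k) (at 0))"

end

theory Submission
  imports Defs
begin

text \<open>
  Differentiating the smoothed risks under the integral sign and letting \<open>r \<rightarrow> \<infinity>\<close> by dominated
  convergence shows \<open>G \<theta> k = -2 \<integral> (f - N\<^sub>\<theta>) \<partial>\<^sub>k N\<^sub>\<theta> d\<mu>\<close>, where the derivative of ReLU is read
  as the indicator of \<open>(0, \<infinity>)\<close>. As \<open>max z 0\<close> is this indicator times \<open>z\<close>, the network satisfies
  the Euler-type relation \<open>\<Sum>\<^sub>k \<theta>\<^sub>k \<partial>\<^sub>k N\<^sub>\<theta> = 2 N\<^sub>\<theta> - c\<^sub>\<theta>\<close>, while \<open>\<partial>\<^sub>c N\<^sub>\<theta> = 1\<close>; hence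
  \<open>\<Sum>\<^sub>k \<theta>\<^sub>k G \<theta> k + (c\<^sub>\<theta> - 2\<xi>) G \<theta> c = 4 (L \<theta> + \<integral> (f - \<xi>) (N\<^sub>\<theta> - f) d\<mu>)\<close>.
  Every coordinate of the flow satisfies \<open>x(t)\<^sup>2 = x(0)\<^sup>2 - 2 \<integral>\<^sub>0\<^sup>t x g\<close> (by Fubini, since \<open>\<Theta>\<close> is
  only absolutely continuous), and summing gives the identity. The inequality follows from
  \<open>(f - \<xi>)\<^sup>2 + (f - N\<^sub>\<theta>)\<^sup>2 + 2 (f - \<xi>) (N\<^sub>\<theta> - f) = (N\<^sub>\<theta> - \<xi>)\<^sup>2 \<ge> 0\<close>.
\<close>

section \<open>Squares along integral equations\<close>

lemma integrable_lborel_pair_mult: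
  fixes g :: "real \<Rightarrow> real"
  assumes g: "integrable lborel g"
  shows "integrable (lborel \<Otimes>\<^sub>M lborel) (\<lambda>(u, v). g u * g v)"
proof (rule lborel_pair.Fubini_integrable)
  have [measurable]: "g \<in> borel_measurable lborel"
    using g by auto
  show "(\<lambda>(u, v). g u * g v) \<in> borel_measurable (lborel \<Otimes>\<^sub>M lborel)"
    by measurable
  have "(\<lambda>u. \<integral>v. norm (case (u, v) of (u, v) \<Rightarrow> g u * g v) \<partial>lborel) = (\<lambda>u. \<bar>g u\<bar> * (\<integral>v. \<bar>g v\<bar> \<partial>lborel))"
    by (auto simp: abs_mult)
  then show "integrable lborel (\<lambda>u. \<integral>v. norm (case (u, v) of (u, v) \<Rightarrow> g u * g v) \<partial>lborel)"
    using g by simp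
qed (use g in simp)

lemma running_integral_lborel:
  fixes g :: "real \<Rightarrow> real"
  assumes g: "integrable lborel g"
  shows "(\<lambda>u. LINT v:{..u}|lborel. g v) \<in> borel_measurable lborel"
    and "integrable lborel (\<lambda>u. g u * (LINT v:{..u}|lborel. g v))"
proof -
  have [measurable]: "g \<in> borel_measurable borel"
    using g by (simp add: measurable_lborel1)
  have "(\<lambda>(u, v). of_bool (v \<le> u) * g v) \<in> borel_measurable (lborel \<Otimes>\<^sub>M lborel)"
    by measurable
  then have "(\<lambda>u. \<integral>v. of_bool (v \<le> u) * g v \<partial>lborel) \<in> borel_measurable lborel"
    by (rule lborel.borel_measurable_lebesgue_integral)
  then show meas: "(\<lambda>u. LINT v:{..u}|lborel. g v) \<in> borel_measurable lborel"
    by (simp add: set_lebesgue_integral_def indicator_def)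
  have bound: "\<bar>LINT v:{..u}|lborel. g v\<bar> \<le> (\<integral>v. \<bar>g v\<bar> \<partial>lborel)" for u
  proof -
    have "\<bar>LINT v:{..u}|lborel. g v\<bar> \<le> (\<integral>v. \<bar>indicator {..u} v * g v\<bar> \<partial>lborel)"
      unfolding set_lebesgue_integral_def by (simp add: integral_abs_bound)
    also have "\<dots> \<le> (\<integral>v. \<bar>g v\<bar> \<partial>lborel)"
      using g integrable_mult_indicator[of "{..u}" lborel g]
      by (intro integral_mono integrable_abs) (auto simp: abs_mult indicator_def)
    finally show ?thesis .
  qed
  show "integrable lborel (\<lambda>u. g u * (LINT v:{..u}|lborel. g v))"
  proof (rule Bochner_Integration.integrable_bound)
    show "integrable lborel (\<lambda>u. g u * (\<integral>v. \<bar>g v\<bar> \<partial>lborel))"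
      using g by simp
    show "AE u in lborel. norm (g u * (LINT v:{..u}|lborel. g v)) \<le> norm (g u * (\<integral>v. \<bar>g v\<bar> \<partial>lborel))"
      using bound by (auto simp: abs_mult intro!: mult_left_mono)
  qed (use meas in simp)
qed

text \<open>Fubini on the triangle \<open>u < v\<close>: integrating \<open>g u g v\<close> first in \<open>u\<close> and first in \<open>v\<close>
  gives \<open>\<integral> g z\<close> and \<open>(\<integral>g)\<^sup>2 - \<integral> g z\<close>.\<close>
lemma power2_integral_lborel:
  fixes g :: "real \<Rightarrow> real"
  assumes g: "integrable lborel g"
  defines "z \<equiv> \<lambda>u. LINT v:{..u}|lborel. g v"
  shows "(\<integral>u. g u \<partial>lborel)\<^sup>2 = 2 * (\<integral>u. g u * z u \<partial>lborel)"
proof -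
  have [measurable]: "g \<in> borel_measurable borel"
    using g by (simp add: measurable_lborel1)
  define Y where "Y = (\<integral>u. g u \<partial>lborel)"
  define h where "h = (\<lambda>u v. of_bool (u < v) * (g u * g v))"
  have "integrable (lborel \<Otimes>\<^sub>M lborel) (case_prod h)"
  proof (rule Bochner_Integration.integrable_bound[OF integrable_lborel_pair_mult[OF g]])
    show "case_prod h \<in> borel_measurable (lborel \<Otimes>\<^sub>M lborel)"
      unfolding h_def by measurable
  qed (auto simp: h_def)
  then have "(\<integral>v. (\<integral>u. h u v \<partial>lborel) \<partial>lborel) = (\<integral>u. (\<integral>v. h u v \<partial>lborel) \<partial>lborel)"
    by (rule lborel_pair.Fubini_integral)
  moreover have "(\<integral>u. h u v \<partial>lborel) = g v * z v" for v
  proof -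
    have "(\<lambda>u. h u v) = (\<lambda>u. g v * (indicator {..<v} u * g u))"
      by (simp add: fun_eq_iff h_def indicator_def mult_ac)
    then have "(\<integral>u. h u v \<partial>lborel) = g v * (\<integral>u. indicator {..<v} u * g u \<partial>lborel)"
      by (simp only: integral_mult_right_zero)
    also have "(\<integral>u. indicator {..<v} u * g u \<partial>lborel) = z v"
      unfolding z_def set_lebesgue_integral_def using AE_lborel_singleton[of v]
      by (intro integral_cong_AE) (auto elim!: eventually_mono simp: indicator_def)
    finally show ?thesis .
  qed
  moreover have "(\<integral>v. h u v \<partial>lborel) = g u * (Y - z u)" for u
  proof -
    have "(\<lambda>v. h u v) = (\<lambda>v. g u * (g v - indicator {..u} v * g v))"
      by (auto simp: fun_eq_iff h_def indicator_def)
    then have "(\<integral>v. h u v \<partial>lborel) = g u * (\<integral>v. g v - indicator {..u} v * g v \<partial>lborel)"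
      by (simp only: integral_mult_right_zero)
    also have "\<dots> = g u * (Y - z u)"
      unfolding Y_def z_def set_lebesgue_integral_def
      using g integrable_mult_indicator[of "{..u}" lborel g]
      by simp
    finally show ?thesis .
  qed
  ultimately have "(\<integral>v. g v * z v \<partial>lborel) = (\<integral>u. Y * g u - g u * z u \<partial>lborel)"
    by (simp add: algebra_simps)
  also have "\<dots> = Y * Y - (\<integral>u. g u * z u \<partial>lborel)"
    using g running_integral_lborel(2)[OF g] by (simp add: Y_def z_def)
  finally show ?thesis
    by (simp add: Y_def power2_eq_square)
qed

lemma integral_equation_power2:
  fixes x g :: "real \<Rightarrow> real" and t :: real
  assumes t: "0 \<le> t" and g: "set_integrable lborel {0..t} g"
    and x: "\<And>s. s \<in> {0..t} \<Longrightarrow> x s = x 0 - (LINT u:{0..s}|lborel. g u)"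
  shows "set_integrable lborel {0..t} (\<lambda>u. x u * g u)"
    and "(x t)\<^sup>2 = (x 0)\<^sup>2 - 2 * (LINT u:{0..t}|lborel. x u * g u)"
proof -
  define g0 where "g0 = (\<lambda>u. indicator {0..t} u * g u)"
  have g0: "integrable lborel g0"
    using g unfolding set_integrable_def g0_def by simp
  define z where "z = (\<lambda>u. LINT v:{..u}|lborel. g0 v)"
  note square = running_integral_lborel(2)[OF g0] power2_integral_lborel[OF g0]
  have zx: "z u = x 0 - x u" if "u \<in> {0..t}" for u
  proof -
    have "z u = (LINT v:{0..u}|lborel. g v)"
      unfolding z_def set_lebesgue_integral_def g0_def using that
      by (auto intro!: Bochner_Integration.integral_cong simp: indicator_def)
    then show ?thesis
      using x[OF that] by simp
  qed
  have eq: "(\<lambda>u. indicator {0..t} u *\<^sub>R (x u * g u)) = (\<lambda>u. x 0 * g0 u - g0 u * z u)"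
    by (auto simp: fun_eq_iff g0_def zx algebra_simps indicator_def)
  show "set_integrable lborel {0..t} (\<lambda>u. x u * g u)"
    unfolding set_integrable_def eq using g0 square(1) by (simp add: z_def)
  have Y: "(\<integral>u. g0 u \<partial>lborel) = x 0 - x t"
    using x[of t] t unfolding g0_def set_lebesgue_integral_def by simp
  have "(\<integral>u. g0 u * z u \<partial>lborel) = (x 0 - x t)\<^sup>2 / 2"
    using square(2) unfolding Y z_def by simp
  then have "(LINT u:{0..t}|lborel. x u * g u) = x 0 * (x 0 - x t) - (x 0 - x t)\<^sup>2 / 2"
    unfolding set_lebesgue_integral_def eq using g0 square(1) Y by (simp add: z_def)
  then show "(x t)\<^sup>2 = (x 0)\<^sup>2 - 2 * (LINT u:{0..t}|lborel. x u * g u)"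
    by (simp add: power2_eq_square field_simps)
qed

lemma set_integrable_sum:
  fixes f :: "'i \<Rightarrow> 'a \<Rightarrow> real"
  assumes "\<And>i. i \<in> I \<Longrightarrow> set_integrable M A (f i)"
  shows "set_integrable M A (\<lambda>x. \<Sum>i\<in>I. f i x)"
  using assms unfolding set_integrable_def by (simp add: sum_distrib_left)

lemma set_integral_sum:
  fixes f :: "'i \<Rightarrow> 'a \<Rightarrow> real"
  assumes "\<And>i. i \<in> I \<Longrightarrow> set_integrable M A (f i)"
  shows "(LINT x:A|M. (\<Sum>i\<in>I. f i x)) = (\<Sum>i\<in>I. LINT x:A|M. f i x)"
  using assms unfolding set_integrable_def set_lebesgue_integral_def
  by (simp add: sum_distrib_left Bochner_Integration.integral_sum)

lemma sum_power2_integral_equation: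
  fixes x g :: "real \<Rightarrow> 'i \<Rightarrow> real" and t :: real
  assumes t: "0 \<le> t" and g: "\<And>k. k \<in> K \<Longrightarrow> set_integrable lborel {0..t} (\<lambda>u. g u k)"
    and x: "\<And>s k. s \<in> {0..t} \<Longrightarrow> k \<in> K \<Longrightarrow> x s k = x 0 k - (LINT u:{0..s}|lborel. g u k)"
  shows "set_integrable lborel {0..t} (\<lambda>u. \<Sum>k\<in>K. x u k * g u k)"
    and "(\<Sum>k\<in>K. (x t k)\<^sup>2) = (\<Sum>k\<in>K. (x 0 k)\<^sup>2) - 2 * (LINT u:{0..t}|lborel. \<Sum>k\<in>K. x u k * g u k)"
proof -
  note coord = integral_equation_power2[OF t g x]
  show "set_integrable lborel {0..t} (\<lambda>u. \<Sum>k\<in>K. x u k * g u k)"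
    using coord(1) by (rule set_integrable_sum)
  show "(\<Sum>k\<in>K. (x t k)\<^sup>2) = (\<Sum>k\<in>K. (x 0 k)\<^sup>2) - 2 * (LINT u:{0..t}|lborel. \<Sum>k\<in>K. x u k * g u k)"
    using coord by (simp add: set_integral_sum sum_subtractf sum_distrib_left)
qed

section \<open>Parametric integrals over a finite measure\<close>

lemma (in finite_measure) tendsto_integral_at_within:
  fixes F :: "'b::first_countable_topology \<Rightarrow> 'a \<Rightarrow> real"
  assumes meas: "\<And>h. h \<in> S \<Longrightarrow> F h \<in> borel_measurable M" "l \<in> borel_measurable M"
    and lim: "\<And>x. x \<in> space M \<Longrightarrow> ((\<lambda>h. F h x) \<longlongrightarrow> l x) (at a within S)"
    and bound: "\<And>h x. h \<in> S \<Longrightarrow> x \<in> space M \<Longrightarrow> \<bar>F h x\<bar> \<le> K"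
  shows "((\<lambda>h. \<integral>x. F h x \<partial>M) \<longlongrightarrow> (\<integral>x. l x \<partial>M)) (at a within S)"
  unfolding tendsto_at_iff_sequentially comp_def
proof (intro allI impI)
  fix X :: "nat \<Rightarrow> 'b"
  assume X: "\<forall>i. X i \<in> S - {a}" "X \<longlonglongrightarrow> a"
  show "(\<lambda>i. \<integral>x. F (X i) x \<partial>M) \<longlonglongrightarrow> (\<integral>x. l x \<partial>M)"
  proof (rule integral_dominated_convergence[where w="\<lambda>_. K"])
    show "AE x in M. (\<lambda>i. F (X i) x) \<longlonglongrightarrow> l x"
      using lim X unfolding tendsto_at_iff_sequentially comp_def by blast
  qed (use meas bound X in auto)
qed

lemma abs_diff_le_deriv_bound:
  fixes \<phi> \<phi>' :: "real \<Rightarrow> real"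
  assumes "\<And>s. \<bar>s\<bar> \<le> 1 \<Longrightarrow> (\<phi> has_real_derivative \<phi>' s) (at s)"
    and "\<And>s. \<bar>s\<bar> \<le> 1 \<Longrightarrow> \<bar>\<phi>' s\<bar> \<le> K" and "\<bar>h\<bar> \<le> 1"
  shows "\<bar>\<phi> h - \<phi> 0\<bar> \<le> K * \<bar>h\<bar>"
proof -
  have "norm (\<phi> h - \<phi> 0) \<le> K * norm (h - 0)"
    using assms by (intro field_differentiable_bound[where S="{-1..1}" and f'=\<phi>'])
      (auto intro: has_field_derivative_at_within)
  then show ?thesis
    by simp
qed

lemma (in finite_measure) has_real_derivative_integral:
  fixes F F' :: "real \<Rightarrow> 'a \<Rightarrow> real"
  assumes meas: "\<And>h. F h \<in> borel_measurable M" "F' 0 \<in> borel_measurable M"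
    and int0: "integrable M (F 0)"
    and deriv: "\<And>x s. x \<in> space M \<Longrightarrow> \<bar>s\<bar> \<le> 1 \<Longrightarrow> ((\<lambda>h. F h x) has_real_derivative F' s x) (at s)"
    and bound: "\<And>x s. x \<in> space M \<Longrightarrow> \<bar>s\<bar> \<le> 1 \<Longrightarrow> \<bar>F' s x\<bar> \<le> K"
  shows "((\<lambda>h. \<integral>x. F h x \<partial>M) has_real_derivative (\<integral>x. F' 0 x \<partial>M)) (at 0)"
proof -
  have lipschitz: "\<bar>F h x - F 0 x\<bar> \<le> K * \<bar>h\<bar>" if "x \<in> space M" "\<bar>h\<bar> \<le> 1" for x h
    using deriv bound that by (intro abs_diff_le_deriv_bound) auto
  have integrable: "integrable M (F h)" if h: "\<bar>h\<bar> \<le> 1" for h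
  proof (rule Bochner_Integration.integrable_bound[where f="\<lambda>x. \<bar>F 0 x\<bar> + K"])
    show "AE x in M. norm (F h x) \<le> norm (\<bar>F 0 x\<bar> + K)"
    proof (rule AE_I2)
      fix x assume x: "x \<in> space M"
      have "0 \<le> K"
        using bound[OF x, of 0] by simp
      then have "K * \<bar>h\<bar> \<le> K"
        using h by (simp add: mult_left_le)
      then show "norm (F h x) \<le> norm (\<bar>F 0 x\<bar> + K)"
        using lipschitz[OF x h] \<open>0 \<le> K\<close> unfolding real_norm_def by linarith
    qed
  qed (use int0 meas in auto)
  have "((\<lambda>h. \<integral>x. (F h x - F 0 x) / h \<partial>M) \<longlongrightarrow> (\<integral>x. F' 0 x \<partial>M)) (at 0 within {-1..1})"
  proof (rule tendsto_integral_at_within[where K=K])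
    fix x assume x: "x \<in> space M"
    have "((\<lambda>h. (F h x - F 0 x) / h) \<longlongrightarrow> F' 0 x) (at 0)"
      using deriv[OF x, of 0] by (simp add: has_field_derivative_iff)
    then show "((\<lambda>h. (F h x - F 0 x) / h) \<longlongrightarrow> F' 0 x) (at 0 within {-1..1})"
      by (rule tendsto_within_subset) simp
    fix h :: real assume "h \<in> {-1..1}"
    \<comment> \<open>at \<open>h = 0\<close> the quotient is \<open>0 / 0 = 0\<close>\<close>
    then show "\<bar>(F h x - F 0 x) / h\<bar> \<le> K"
      using lipschitz[OF x] bound[OF x, of 0] by (auto simp: abs_divide divide_le_eq)
  qed (use meas in auto)
  then have "((\<lambda>h. \<integral>x. (F h x - F 0 x) / h \<partial>M) \<longlongrightarrow> (\<integral>x. F' 0 x \<partial>M)) (at 0)"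
    by (simp add: at_within_Icc_at)
  then have "((\<lambda>h. ((\<integral>x. F h x \<partial>M) - (\<integral>x. F 0 x \<partial>M)) / h) \<longlongrightarrow> (\<integral>x. F' 0 x \<partial>M)) (at 0)"
    by (rule Lim_transform_within[where d=1]) (use integrable in \<open>auto simp: dist_real_def\<close>)
  then show ?thesis
    by (simp add: has_field_derivative_iff)
qed

lemma (in finite_measure) continuous_on_integral:
  fixes F :: "'b::first_countable_topology \<Rightarrow> 'a \<Rightarrow> real"
  assumes meas: "\<And>s. s \<in> S \<Longrightarrow> F s \<in> borel_measurable M"
    and cont: "\<And>x. x \<in> space M \<Longrightarrow> continuous_on S (\<lambda>s. F s x)"
    and bound: "\<And>s x. s \<in> S \<Longrightarrow> x \<in> space M \<Longrightarrow> \<bar>F s x\<bar> \<le> K"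
  shows "continuous_on S (\<lambda>s. \<integral>x. F s x \<partial>M)"
  unfolding continuous_on_def
proof
  fix s assume "s \<in> S"
  then show "((\<lambda>s. \<integral>x. F s x \<partial>M) \<longlongrightarrow> (\<integral>x. F s x \<partial>M)) (at s within S)"
    using meas cont bound by (intro tendsto_integral_at_within[where K=K]) (auto simp: continuous_on_def)
qed

section \<open>Shallow networks with a general activation\<close>

definition neuron_input :: "nat \<Rightarrow> nat \<Rightarrow> (nat \<Rightarrow> real) \<Rightarrow> nat \<Rightarrow> (nat \<Rightarrow> real) \<Rightarrow> real" where
  "neuron_input d H \<theta> i y = bt d H \<theta> i + (\<Sum>j = 1..d. wt d \<theta> i j * y j)"

definition realization :: "nat \<Rightarrow> nat \<Rightarrow> (real \<Rightarrow> real) \<Rightarrow> (nat \<Rightarrow> real) \<Rightarrow> (nat \<Rightarrow> real) \<Rightarrow> real" where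
  "realization d H \<rho> \<theta> y = ct d H \<theta> + (\<Sum>i = 1..H. vt d H \<theta> i * \<rho> (neuron_input d H \<theta> i y))"

definition neuron_input_partial :: "nat \<Rightarrow> nat \<Rightarrow> nat \<Rightarrow> nat \<Rightarrow> (nat \<Rightarrow> real) \<Rightarrow> real" where
  "neuron_input_partial d H k i y =
     of_bool (k = H * d + i) + (\<Sum>j = 1..d. of_bool (k = (i - 1) * d + j) * y j)"

text \<open>The partial derivative of \<open>realization d H \<rho> \<theta> y\<close> in \<open>\<theta>\<^sub>k\<close>, with \<open>\<rho>'\<close> in place of the
  derivative of \<open>\<rho>\<close>; for ReLU, \<open>\<rho>' = indicator {0<..}\<close> is the convention defining \<open>G\<close>.\<close>
definition realization_partial ::
    "nat \<Rightarrow> nat \<Rightarrow> (real \<Rightarrow> real) \<Rightarrow> (real \<Rightarrow> real) \<Rightarrow> (nat \<Rightarrow> real) \<Rightarrow> nat \<Rightarrow> (nat \<Rightarrow> real) \<Rightarrow> real" where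
  "realization_partial d H \<rho> \<rho>' \<theta> k y = of_bool (k = pdim d H) +
     (\<Sum>i = 1..H. of_bool (k = H * (d + 1) + i) * \<rho> (neuron_input d H \<theta> i y)
        + vt d H \<theta> i * \<rho>' (neuron_input d H \<theta> i y) * neuron_input_partial d H k i y)"

abbreviation NN_partial :: "nat \<Rightarrow> nat \<Rightarrow> (nat \<Rightarrow> real) \<Rightarrow> nat \<Rightarrow> (nat \<Rightarrow> real) \<Rightarrow> real" where
  "NN_partial d H \<equiv> realization_partial d H (\<lambda>z. max z 0) (indicator {0<..})"

lemma NN_eq_realization: "NN d H = realization d H (\<lambda>z. max z 0)"
  by (simp add: fun_eq_iff NN_def realization_def neuron_input_def)

lemma LLr_eq_integral_realization:
  "LLr d H f \<mu> \<rho> \<theta> = (\<integral>y. (f y - realization d H \<rho> \<theta> y)\<^sup>2 \<partial>\<mu>)"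
  by (simp add: LLr_def realization_def neuron_input_def diff_diff_eq)

lemma pdim_eq: "pdim d H = H * d + 2 * H + 1"
  by (simp add: pdim_def mult.commute)

lemma weight_index_bounds:
  fixes i j d H :: nat
  assumes "i \<in> {1..H}" "j \<in> {1..d}"
  shows "1 \<le> (i - 1) * d + j" "(i - 1) * d + j \<le> H * d"
proof -
  have "(i - 1) * d \<le> (H - 1) * d"
    using assms by (intro mult_le_mono1) auto
  then have "(i - 1) * d + j \<le> (H - 1) * d + d"
    by (rule add_mono) (use assms in auto)
  also have "\<dots> = H * d"
    using assms by (cases H) auto
  finally show "(i - 1) * d + j \<le> H * d" .
qed (use assms in auto)

lemma wt_update: "wt d (\<theta>(k := \<theta> k + h)) i j = wt d \<theta> i j + h * of_bool (k = (i - 1) * d + j)"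
  by (auto simp: wt_def)

lemma bt_update: "bt d H (\<theta>(k := \<theta> k + h)) i = bt d H \<theta> i + h * of_bool (k = H * d + i)"
  by (auto simp: bt_def)

lemma vt_update: "vt d H (\<theta>(k := \<theta> k + h)) i = vt d H \<theta> i + h * of_bool (k = H * (d + 1) + i)"
  by (auto simp: vt_def)

lemma ct_update: "ct d H (\<theta>(k := \<theta> k + h)) = ct d H \<theta> + h * of_bool (k = pdim d H)"
  by (auto simp: ct_def)

lemma neuron_input_update:
  "neuron_input d H (\<theta>(k := \<theta> k + h)) i y = neuron_input d H \<theta> i y + h * neuron_input_partial d H k i y"
  unfolding neuron_input_def neuron_input_partial_def bt_update wt_update
  by (simp add: algebra_simps sum.distrib sum_distrib_left del: sum_mult_of_bool_eq)

lemma realization_update: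
  "realization d H \<rho> (\<theta>(k := \<theta> k + h)) y = ct d H \<theta> + h * of_bool (k = pdim d H) +
     (\<Sum>i = 1..H. (vt d H \<theta> i + h * of_bool (k = H * (d + 1) + i))
        * \<rho> (neuron_input d H \<theta> i y + h * neuron_input_partial d H k i y))"
  by (simp add: realization_def neuron_input_update vt_update ct_update)

lemma has_real_derivative_realization:
  assumes \<rho>: "\<And>z. (\<rho> has_real_derivative \<rho>' z) (at z)"
  shows "((\<lambda>h. realization d H \<rho> (\<theta>(k := \<theta> k + h)) y) has_real_derivative
           realization_partial d H \<rho> \<rho>' (\<theta>(k := \<theta> k + s)) k y) (at s)"
  unfolding realization_update realization_partial_def neuron_input_update vt_update
  by (rule derivative_eq_intros DERIV_chain2[OF \<rho>] refl)+ (simp add: algebra_simps sum.distrib)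

lemma abs_sum_le_card_mult:
  fixes f :: "'a \<Rightarrow> real" and K :: real
  shows "(\<And>i. i \<in> A \<Longrightarrow> \<bar>f i\<bar> \<le> K) \<Longrightarrow> \<bar>sum f A\<bar> \<le> card A * K"
  using order_trans[OF sum_abs sum_bounded_above[of A "\<lambda>i. \<bar>f i\<bar>" K]] by auto

lemma parameter_indices:
  fixes i j d H :: nat
  assumes i: "i \<in> {1..H}"
  shows "j \<in> {1..d} \<Longrightarrow> (i - 1) * d + j \<in> {1..pdim d H}"
    and "H * d + i \<in> {1..pdim d H}" "H * (d + 1) + i \<in> {1..pdim d H}"
  using weight_index_bounds[OF i, of j d] i by (auto simp: pdim_eq)

lemma abs_parameters_le:
  fixes \<theta> :: "nat \<Rightarrow> real"
  assumes \<theta>: "\<forall>m\<in>{1..pdim d H}. \<bar>\<theta> m\<bar> \<le> T" and i: "i \<in> {1..H}"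
  shows "j \<in> {1..d} \<Longrightarrow> \<bar>wt d \<theta> i j\<bar> \<le> T" "\<bar>bt d H \<theta> i\<bar> \<le> T" "\<bar>vt d H \<theta> i\<bar> \<le> T"
  unfolding wt_def bt_def vt_def using \<theta> parameter_indices[OF i] by simp_all

lemma abs_neuron_input_le:
  fixes \<theta> y :: "nat \<Rightarrow> real"
  assumes \<theta>: "\<forall>m\<in>{1..pdim d H}. \<bar>\<theta> m\<bar> \<le> T"
    and y: "\<forall>j\<in>{1..d}. \<bar>y j\<bar> \<le> B" and i: "i \<in> {1..H}"
  shows "\<bar>neuron_input d H \<theta> i y\<bar> \<le> T * (1 + d * B)"
proof -
  have "0 \<le> T"
    using \<theta> by (auto simp: pdim_eq)
  then have "\<bar>wt d \<theta> i j * y j\<bar> \<le> T * B" if "j \<in> {1..d}" for j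
    unfolding abs_mult using abs_parameters_le(1)[OF \<theta> i that] y that
    by (intro mult_mono) auto
  then have "\<bar>\<Sum>j = 1..d. wt d \<theta> i j * y j\<bar> \<le> d * (T * B)"
    using abs_sum_le_card_mult[of "{1..d}"] by simp
  then show ?thesis
    using abs_parameters_le(2)[OF \<theta> i] by (simp add: neuron_input_def algebra_simps)
qed

lemma abs_neuron_input_partial_le:
  fixes y :: "nat \<Rightarrow> real"
  assumes y: "\<forall>j\<in>{1..d}. \<bar>y j\<bar> \<le> B"
  shows "\<bar>neuron_input_partial d H k i y\<bar> \<le> 1 + d * B"
proof -
  have "\<bar>of_bool P * y j\<bar> \<le> B" if "j \<in> {1..d}" for P j
    using y that by auto
  then have "\<bar>\<Sum>j = 1..d. of_bool (k = (i - 1) * d + j) * y j\<bar> \<le> card {1..d} * B"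
    by (intro abs_sum_le_card_mult)
  then show ?thesis
    unfolding neuron_input_partial_def by (auto intro: order_trans[OF abs_triangle_ineq])
qed

lemma abs_update_le_sum_abs:
  fixes \<theta> :: "nat \<Rightarrow> real"
  assumes "\<bar>s\<bar> \<le> 1"
  shows "\<forall>m\<in>{1..n}. \<bar>(\<theta>(k := \<theta> k + s)) m\<bar> \<le> 1 + (\<Sum>m = 1..n. \<bar>\<theta> m\<bar>)"
proof
  fix m assume "m \<in> {1..n}"
  then have "\<bar>\<theta> m\<bar> \<le> (\<Sum>m = 1..n. \<bar>\<theta> m\<bar>)"
    by (intro member_le_sum) auto
  then show "\<bar>(\<theta>(k := \<theta> k + s)) m\<bar> \<le> 1 + (\<Sum>m = 1..n. \<bar>\<theta> m\<bar>)"
    using assms by auto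
qed

lemma abs_ct_le:
  fixes \<theta> :: "nat \<Rightarrow> real"
  shows "\<forall>m\<in>{1..pdim d H}. \<bar>\<theta> m\<bar> \<le> T \<Longrightarrow> \<bar>ct d H \<theta>\<bar> \<le> T"
  by (simp add: ct_def pdim_eq)

lemma abs_realization_le:
  fixes \<theta> y :: "nat \<Rightarrow> real"
  assumes \<theta>: "\<forall>m\<in>{1..pdim d H}. \<bar>\<theta> m\<bar> \<le> T"
    and y: "\<forall>j\<in>{1..d}. \<bar>y j\<bar> \<le> B"
    and \<rho>: "\<And>z. \<bar>z\<bar> \<le> T * (1 + d * B) \<Longrightarrow> \<bar>\<rho> z\<bar> \<le> C"
  shows "\<bar>realization d H \<rho> \<theta> y\<bar> \<le> T + H * (T * C)"
proof -
  have "\<bar>vt d H \<theta> i * \<rho> (neuron_input d H \<theta> i y)\<bar> \<le> T * C" if i: "i \<in> {1..H}" for i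
    unfolding abs_mult using abs_parameters_le(3)[OF \<theta> i] \<rho>[OF abs_neuron_input_le[OF \<theta> y i]]
    by (intro mult_mono) auto
  then have "\<bar>\<Sum>i = 1..H. vt d H \<theta> i * \<rho> (neuron_input d H \<theta> i y)\<bar> \<le> card {1..H} * (T * C)"
    by (intro abs_sum_le_card_mult)
  then show ?thesis
    unfolding realization_def using abs_ct_le[OF \<theta>] by (auto intro: order_trans[OF abs_triangle_ineq])
qed

lemma abs_realization_partial_le:
  fixes \<theta> y :: "nat \<Rightarrow> real"
  assumes \<theta>: "\<forall>m\<in>{1..pdim d H}. \<bar>\<theta> m\<bar> \<le> T"
    and y: "\<forall>j\<in>{1..d}. \<bar>y j\<bar> \<le> B"
    and \<rho>: "\<And>z. \<bar>z\<bar> \<le> T * (1 + d * B) \<Longrightarrow> \<bar>\<rho> z\<bar> \<le> C \<and> \<bar>\<rho>' z\<bar> \<le> C"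
  shows "\<bar>realization_partial d H \<rho> \<rho>' \<theta> k y\<bar> \<le> 1 + H * (C + T * (C * (1 + d * B)))"
proof -
  have "\<bar>of_bool (k = H * (d + 1) + i) * \<rho> (neuron_input d H \<theta> i y)
      + vt d H \<theta> i * \<rho>' (neuron_input d H \<theta> i y) * neuron_input_partial d H k i y\<bar>
      \<le> C + T * (C * (1 + d * B))" if i: "i \<in> {1..H}" for i
  proof -
    note u = \<rho>[OF abs_neuron_input_le[OF \<theta> y i]]
    have "\<bar>of_bool (k = H * (d + 1) + i) * \<rho> (neuron_input d H \<theta> i y)\<bar> \<le> C"
      using u by auto
    moreover have "\<bar>vt d H \<theta> i * \<rho>' (neuron_input d H \<theta> i y) * neuron_input_partial d H k i y\<bar>
        \<le> T * (C * (1 + d * B))"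
      unfolding abs_mult mult.assoc
      using abs_parameters_le(3)[OF \<theta> i] u abs_neuron_input_partial_le[OF y]
      by (intro mult_mono) auto
    ultimately show ?thesis
      by (auto intro: order_trans[OF abs_triangle_ineq])
  qed
  then have "\<bar>\<Sum>i = 1..H. of_bool (k = H * (d + 1) + i) * \<rho> (neuron_input d H \<theta> i y)
      + vt d H \<theta> i * \<rho>' (neuron_input d H \<theta> i y) * neuron_input_partial d H k i y\<bar>
      \<le> card {1..H} * (C + T * (C * (1 + d * B)))"
    by (intro abs_sum_le_card_mult)
  then show ?thesis
    unfolding realization_partial_def by (auto intro: order_trans[OF abs_triangle_ineq])
qed

lemma sum_mult_of_bool_eq_member:
  fixes f :: "'a \<Rightarrow> real"
  shows "finite A \<Longrightarrow> m \<in> A \<Longrightarrow> (\<Sum>k\<in>A. f k * of_bool (k = m)) = f m"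
  by (simp add: Int_insert_right)

lemma sum_mult_neuron_input_partial:
  fixes \<theta> y :: "nat \<Rightarrow> real"
  assumes i: "i \<in> {1..H}"
  shows "(\<Sum>k = 1..pdim d H. \<theta> k * neuron_input_partial d H k i y) = neuron_input d H \<theta> i y"
proof -
  have "(\<Sum>k = 1..pdim d H. \<theta> k * neuron_input_partial d H k i y) =
      (\<Sum>k = 1..pdim d H. \<theta> k * of_bool (k = H * d + i)) +
      (\<Sum>k = 1..pdim d H. \<Sum>j = 1..d. \<theta> k * of_bool (k = (i - 1) * d + j) * y j)"
    by (simp add: neuron_input_partial_def distrib_left sum.distrib sum_distrib_left mult.assoc
        del: sum_mult_of_bool_eq sum_of_bool_mult_eq)
  also have "\<dots> = (\<Sum>k = 1..pdim d H. \<theta> k * of_bool (k = H * d + i)) +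
      (\<Sum>j = 1..d. (\<Sum>k = 1..pdim d H. \<theta> k * of_bool (k = (i - 1) * d + j)) * y j)"
    by (subst sum.swap) (simp only: sum_distrib_right)
  also have "\<dots> = neuron_input d H \<theta> i y"
    using parameter_indices[where d=d and H=H, OF i]
    by (simp add: sum_mult_of_bool_eq_member neuron_input_def bt_def wt_def del: sum_mult_of_bool_eq)
  finally show ?thesis .
qed

lemma sum_mult_realization_partial:
  fixes \<theta> y :: "nat \<Rightarrow> real"
  shows "(\<Sum>k = 1..pdim d H. \<theta> k * realization_partial d H \<rho> \<rho>' \<theta> k y) = ct d H \<theta> +
    (\<Sum>i = 1..H. vt d H \<theta> i * (\<rho> (neuron_input d H \<theta> i y)
       + \<rho>' (neuron_input d H \<theta> i y) * neuron_input d H \<theta> i y))"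
proof -
  let ?u = "neuron_input d H \<theta>"
  have "(\<Sum>k = 1..pdim d H. \<theta> k * realization_partial d H \<rho> \<rho>' \<theta> k y) =
      (\<Sum>k = 1..pdim d H. \<theta> k * of_bool (k = pdim d H)) +
      (\<Sum>k = 1..pdim d H. \<Sum>i = 1..H. \<theta> k * of_bool (k = H * (d + 1) + i) * \<rho> (?u i y)
        + vt d H \<theta> i * \<rho>' (?u i y) * (\<theta> k * neuron_input_partial d H k i y))"
    by (simp add: realization_partial_def distrib_left sum.distrib sum_distrib_left mult_ac
        del: sum_mult_of_bool_eq sum_of_bool_mult_eq)
  also have "\<dots> = (\<Sum>k = 1..pdim d H. \<theta> k * of_bool (k = pdim d H)) +
      (\<Sum>i = 1..H. (\<Sum>k = 1..pdim d H. \<theta> k * of_bool (k = H * (d + 1) + i)) * \<rho> (?u i y)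
        + vt d H \<theta> i * \<rho>' (?u i y) * (\<Sum>k = 1..pdim d H. \<theta> k * neuron_input_partial d H k i y))"
    by (subst sum.swap) (simp only: sum.distrib sum_distrib_left sum_distrib_right)
  also have "\<dots> = ct d H \<theta> +
      (\<Sum>i = 1..H. vt d H \<theta> i * \<rho> (?u i y) + vt d H \<theta> i * \<rho>' (?u i y) * ?u i y)"
    using parameter_indices(3)[where d=d and H=H] sum_mult_neuron_input_partial[where \<theta>=\<theta> and y=y]
    by (simp add: sum_mult_of_bool_eq_member ct_def vt_def del: sum_mult_of_bool_eq cong: sum.cong)
      (simp add: pdim_eq)
  finally show ?thesis
    by (simp add: algebra_simps)
qed

text \<open>The ReLU identity \<open>max z 0 + \<one>\<^sub>(\<^sub>0\<^sub>,\<^sub>\<infinity>\<^sub>) z \<cdot> z = 2 max z 0\<close> makes this an Euler-type relation.\<close>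
lemma sum_mult_relu_realization_partial:
  fixes \<theta> y :: "nat \<Rightarrow> real"
  shows "(\<Sum>k = 1..pdim d H. \<theta> k * NN_partial d H \<theta> k y) = 2 * NN d H \<theta> y - ct d H \<theta>"
proof -
  have "max z 0 + indicator {0<..} z * z = 2 * max z 0" for z :: real
    by (auto simp: indicator_def)
  then show ?thesis
    unfolding sum_mult_realization_partial NN_eq_realization realization_def
    by (simp add: sum_distrib_left algebra_simps)
qed

lemma realization_partial_output_bias: "realization_partial d H \<rho> \<rho>' \<theta> (pdim d H) y = 1"
proof -
  have "neuron_input_partial d H (pdim d H) i y = 0" if i: "i \<in> {1..H}" for i
  proof -
    have "pdim d H \<noteq> (i - 1) * d + j" if "j \<in> {1..d}" for j
      using weight_index_bounds(2)[OF i that] by (simp add: pdim_eq)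
    moreover have "pdim d H \<noteq> H * d + i"
      using i by (simp add: pdim_eq)
    ultimately show ?thesis
      by (auto simp: neuron_input_partial_def intro!: sum.neutral)
  qed
  then show ?thesis
    by (auto simp: realization_partial_def pdim_eq intro!: sum.neutral)
qed

section \<open>The risk on the cube\<close>

lemma compact_PiE:
  fixes S :: "'a \<Rightarrow> 'b::topological_space set"
  assumes "\<And>i. i \<in> I \<Longrightarrow> compact (S i)"
  shows "compact (PiE I S)"
proof -
  have "PiE I S = PiE UNIV (\<lambda>i. if i \<in> I then S i else {undefined})"
    by (auto simp: PiE_iff extensional_def split: if_splits)
  moreover have "compactin (product_topology (\<lambda>_. euclidean) UNIV)
      (PiE UNIV (\<lambda>i. if i \<in> I then S i else {undefined}))"
    using assms by (auto simp: compactin_PiE)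
  ultimately show ?thesis
    by (simp add: euclidean_product_topology)
qed

lemma bounded_mult_comp:
  fixes f g :: "'a \<Rightarrow> 'b::real_normed_algebra"
  assumes "bounded (f ` S)" "bounded (g ` S)"
  shows "bounded ((\<lambda>x. f x * g x) ` S)"
proof -
  obtain B C where "\<forall>x\<in>S. norm (f x) \<le> B" "\<forall>x\<in>S. norm (g x) \<le> C"
    using assms unfolding bounded_iff by auto
  then have "\<forall>x\<in>S. norm (f x * g x) \<le> B * C"
    by (metis norm_ge_zero norm_mult_ineq order.trans mult_mono)
  then show ?thesis
    unfolding bounded_iff by auto
qed

lemma bounded_const_image: "bounded ((\<lambda>x. c) ` S)"
  by (rule bounded_subset[of "{c}"]) auto

locale relu_risk =
  fixes d H :: nat and a b :: real and f :: "(nat \<Rightarrow> real) \<Rightarrow> real" and \<mu> :: "(nat \<Rightarrow> real) measure"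
  assumes f_cont: "continuous_on (PiE {1..d} (\<lambda>_. {a..b})) f"
    and sets_\<mu>: "sets \<mu> = sets (Pi\<^sub>M {1..d} (\<lambda>_. restrict_space lborel {a..b}))"
    and finite_\<mu>: "finite_measure \<mu>"
begin

sublocale finite_measure \<mu>
  by (rule finite_\<mu>)

lemma space_\<mu>: "space \<mu> = PiE {1..d} (\<lambda>_. {a..b})"
  using sets_eq_imp_space_eq[OF sets_\<mu>] by (simp add: space_PiM space_restrict_space)

lemma abs_coordinate_le: "y \<in> space \<mu> \<Longrightarrow> \<forall>j\<in>{1..d}. \<bar>y j\<bar> \<le> \<bar>a\<bar> + \<bar>b\<bar>"
  unfolding space_\<mu> by (auto simp: PiE_iff)

lemma measurable_coordinate [measurable]: "(\<lambda>y. y j) \<in> borel_measurable \<mu>"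
proof (cases "j \<in> {1..d}")
  case True
  have "(\<lambda>y. y j) \<in> measurable \<mu> (restrict_space lborel {a..b})"
    using measurable_component_singleton[OF True] measurable_cong_sets[OF sets_\<mu> refl] by blast
  then show ?thesis
    by (rule measurable_compose[where g="\<lambda>z. z"]) (simp add: measurable_restrict_space1)
next
  case False
  then have "y j = undefined" if "y \<in> space \<mu>" for y
    using that by (auto simp: space_\<mu> PiE_iff extensional_def)
  then have "(\<lambda>y. y j) \<in> borel_measurable \<mu> \<longleftrightarrow> (\<lambda>y. undefined :: real) \<in> borel_measurable \<mu>"
    by (intro measurable_cong) auto
  then show ?thesis
    by simp
qed

lemma measurable_f [measurable]: "f \<in> borel_measurable \<mu>"
proof -
  have "(\<lambda>y. y) \<in> measurable \<mu> (restrict_space borel (PiE {1..d} (\<lambda>_. {a..b})))"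
    by (rule measurable_restrict_space2)
      (auto simp: space_\<mu> intro: measurable_coordinatewise_then_product)
  then show ?thesis
    using borel_measurable_continuous_on_restrict[OF f_cont] by (simp add: measurable_compose_rev)
qed

lemma bounded_f: "bounded (f ` space \<mu>)"
  unfolding space_\<mu> by (intro compact_imp_bounded compact_continuous_image f_cont compact_PiE) simp

lemma measurable_realization [measurable]:
  assumes [measurable]: "\<rho> \<in> borel_measurable borel"
  shows "(\<lambda>y. realization d H \<rho> \<theta> y) \<in> borel_measurable \<mu>"
  unfolding realization_def neuron_input_def by measurable

lemma measurable_realization_partial [measurable]:
  assumes [measurable]: "\<rho> \<in> borel_measurable borel" "\<rho>' \<in> borel_measurable borel"
  shows "(\<lambda>y. realization_partial d H \<rho> \<rho>' \<theta> k y) \<in> borel_measurable \<mu>"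
  unfolding realization_partial_def neuron_input_def neuron_input_partial_def by measurable

lemma measurable_NN [measurable]: "(\<lambda>y. NN d H \<theta> y) \<in> borel_measurable \<mu>"
  unfolding NN_eq_realization by measurable

lemma integrable_bounded_image:
  fixes h :: "(nat \<Rightarrow> real) \<Rightarrow> real"
  assumes "h \<in> borel_measurable \<mu>" "bounded (h ` space \<mu>)"
  shows "integrable \<mu> h"
proof -
  obtain B where "\<forall>y\<in>space \<mu>. norm (h y) \<le> B"
    using assms(2) unfolding bounded_iff by auto
  then show ?thesis
    using assms(1) by (intro integrable_const_bound[where B=B] AE_I2) auto
qed

lemma realization_bounded:
  fixes \<rho> \<rho>' :: "'r \<Rightarrow> real \<Rightarrow> real"
  assumes "\<exists>C. \<forall>r z. \<bar>z\<bar> \<le> T * (1 + d * (\<bar>a\<bar> + \<bar>b\<bar>)) \<longrightarrow> \<bar>\<rho> r z\<bar> \<le> C \<and> \<bar>\<rho>' r z\<bar> \<le> C"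
  shows "\<exists>K. \<forall>r \<theta> k. \<forall>y\<in>space \<mu>. (\<forall>m\<in>{1..pdim d H}. \<bar>\<theta> m\<bar> \<le> T) \<longrightarrow>
    \<bar>f y\<bar> \<le> K \<and> \<bar>realization d H (\<rho> r) \<theta> y\<bar> \<le> K \<and> \<bar>realization_partial d H (\<rho> r) (\<rho>' r) \<theta> k y\<bar> \<le> K"
proof -
  define B where "B = \<bar>a\<bar> + \<bar>b\<bar>"
  obtain C where C: "\<And>r z. \<bar>z\<bar> \<le> T * (1 + d * B) \<Longrightarrow> \<bar>\<rho> r z\<bar> \<le> C \<and> \<bar>\<rho>' r z\<bar> \<le> C"
    using assms unfolding B_def by blast
  obtain Mf where Mf: "\<forall>y\<in>space \<mu>. \<bar>f y\<bar> \<le> Mf"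
    using bounded_f unfolding bounded_iff by auto
  define K where "K = max Mf (max (T + H * (T * C)) (1 + H * (C + T * (C * (1 + d * B)))))"
  show ?thesis
  proof (intro exI[of _ K] allI ballI impI conjI)
    fix r \<theta> k y
    assume y: "y \<in> space \<mu>" and \<theta>: "\<forall>m\<in>{1..pdim d H}. \<bar>\<theta> m\<bar> \<le> T"
    note y_bound = abs_coordinate_le[OF y, folded B_def]
    have "\<And>z. \<bar>z\<bar> \<le> T * (1 + d * B) \<Longrightarrow> \<bar>\<rho> r z\<bar> \<le> C"
      using C by blast
    note bounds = Mf y abs_realization_le[OF \<theta> y_bound this] abs_realization_partial_le[OF \<theta> y_bound C]
    show "\<bar>f y\<bar> \<le> K" "\<bar>realization d H (\<rho> r) \<theta> y\<bar> \<le> K"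
      "\<bar>realization_partial d H (\<rho> r) (\<rho>' r) \<theta> k y\<bar> \<le> K"
      using bounds by (auto simp: K_def le_max_iff_disj)
  qed
qed

lemma relu_bounded:
  "\<exists>K. \<forall>\<theta> k. \<forall>y\<in>space \<mu>. (\<forall>m\<in>{1..pdim d H}. \<bar>\<theta> m\<bar> \<le> T) \<longrightarrow>
    \<bar>f y\<bar> \<le> K \<and> \<bar>NN d H \<theta> y\<bar> \<le> K \<and> \<bar>NN_partial d H \<theta> k y\<bar> \<le> K"
proof -
  have "\<exists>C. \<forall>(r::unit) z. \<bar>z\<bar> \<le> T * (1 + d * (\<bar>a\<bar> + \<bar>b\<bar>)) \<longrightarrow>
      \<bar>max z 0\<bar> \<le> C \<and> \<bar>indicator {0<..} z :: real\<bar> \<le> C"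
    by (intro exI[of _ "max (T * (1 + d * (\<bar>a\<bar> + \<bar>b\<bar>))) 1"]) (auto simp: indicator_def)
  from realization_bounded[OF this] show ?thesis
    by (simp add: NN_eq_realization)
qed

lemma bounded_relu_terms:
  "bounded ((\<lambda>y. NN d H \<theta> y) ` space \<mu>)" "bounded ((\<lambda>y. NN_partial d H \<theta> k y) ` space \<mu>)"
proof -
  obtain K where "\<forall>y\<in>space \<mu>. \<bar>NN d H \<theta> y\<bar> \<le> K \<and> \<bar>NN_partial d H \<theta> k y\<bar> \<le> K"
    using relu_bounded[of "1 + (\<Sum>m = 1..pdim d H. \<bar>\<theta> m\<bar>)"]
      abs_update_le_sum_abs[where s=0 and \<theta>=\<theta> and k=k] by force
  then show "bounded ((\<lambda>y. NN d H \<theta> y) ` space \<mu>)" "bounded ((\<lambda>y. NN_partial d H \<theta> k y) ` space \<mu>)"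
    unfolding bounded_iff by auto
qed

lemma integrable_risk_terms:
  "integrable \<mu> (\<lambda>y. (f y - NN d H \<theta> y) * (f y - NN d H \<theta> y))"
  "integrable \<mu> (\<lambda>y. (f y - \<xi>) * (f y - \<xi>))"
  "integrable \<mu> (\<lambda>y. (f y - \<xi>) * (NN d H \<theta> y - f y))"
  using bounded_f bounded_relu_terms bounded_const_image
  by (auto intro!: integrable_bounded_image bounded_mult_comp bounded_minus_comp)

definition generalized_gradient :: "(nat \<Rightarrow> real) \<Rightarrow> nat \<Rightarrow> real" where
  "generalized_gradient \<theta> k = (\<integral>y. 2 * (f y - NN d H \<theta> y) * - NN_partial d H \<theta> k y \<partial>\<mu>)"

lemma lyapunov_gradient_identity:
  "(\<Sum>k = 1..pdim d H. \<theta> k * generalized_gradient \<theta> k)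
      + (ct d H \<theta> - 2 * \<xi>) * generalized_gradient \<theta> (pdim d H)
    = 4 * (LL d H f \<mu> \<theta> + (\<integral>y. (f y - \<xi>) * (NN d H \<theta> y - f y) \<partial>\<mu>))"
proof -
  let ?N = "NN d H \<theta>" and ?D = "NN_partial d H \<theta>"
  have integrable: "integrable \<mu> (\<lambda>y. 2 * (f y - ?N y) * - ?D k y)" for k
    using bounded_f bounded_relu_terms bounded_const_image
    by (intro integrable_bounded_image bounded_mult_comp bounded_minus_comp) auto
  have "(\<Sum>k = 1..pdim d H. \<theta> k * generalized_gradient \<theta> k)
      + (ct d H \<theta> - 2 * \<xi>) * generalized_gradient \<theta> (pdim d H)
    = (\<integral>y. (\<Sum>k = 1..pdim d H. \<theta> k * (2 * (f y - ?N y) * - ?D k y))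
        + (ct d H \<theta> - 2 * \<xi>) * (2 * (f y - ?N y) * - ?D (pdim d H) y) \<partial>\<mu>)"
    unfolding generalized_gradient_def using integrable by simp
  also have "\<dots> = (\<integral>y. 4 * ((f y - ?N y)\<^sup>2 + (f y - \<xi>) * (?N y - f y)) \<partial>\<mu>)"
  proof (rule Bochner_Integration.integral_cong[OF refl])
    fix y
    have "(\<Sum>k = 1..pdim d H. \<theta> k * (2 * (f y - ?N y) * - ?D k y))
        = - 2 * (f y - ?N y) * (2 * ?N y - ct d H \<theta>)"
      unfolding sum_mult_relu_realization_partial[symmetric]
      by (simp add: sum_distrib_left algebra_simps)
    then show "(\<Sum>k = 1..pdim d H. \<theta> k * (2 * (f y - ?N y) * - ?D k y))
        + (ct d H \<theta> - 2 * \<xi>) * (2 * (f y - ?N y) * - ?D (pdim d H) y)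
      = 4 * ((f y - ?N y)\<^sup>2 + (f y - \<xi>) * (?N y - f y))"
      by (simp add: realization_partial_output_bias power2_eq_square algebra_simps)
  qed
  also have "\<dots> = 4 * (LL d H f \<mu> \<theta> + (\<integral>y. (f y - \<xi>) * (?N y - f y) \<partial>\<mu>))"
    unfolding LL_def power2_eq_square using integrable_risk_terms by simp
  finally show ?thesis .
qed

lemma risk_cross_term_nonneg:
  "0 \<le> (\<integral>y. (f y - \<xi>)\<^sup>2 \<partial>\<mu>) + LL d H f \<mu> \<theta> + 2 * (\<integral>y. (f y - \<xi>) * (NN d H \<theta> y - f y) \<partial>\<mu>)"
proof -
  let ?N = "NN d H \<theta>"
  have "(\<integral>y. (f y - \<xi>)\<^sup>2 \<partial>\<mu>) + LL d H f \<mu> \<theta> + 2 * (\<integral>y. (f y - \<xi>) * (?N y - f y) \<partial>\<mu>)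
      = (\<integral>y. (f y - \<xi>)\<^sup>2 + (f y - ?N y)\<^sup>2 + 2 * ((f y - \<xi>) * (?N y - f y)) \<partial>\<mu>)"
    unfolding LL_def power2_eq_square using integrable_risk_terms by simp
  also have "\<dots> = (\<integral>y. (?N y - \<xi>)\<^sup>2 \<partial>\<mu>)"
    by (simp add: power2_eq_square algebra_simps)
  finally show ?thesis
    by simp
qed

lemma bounded_trajectory:
  fixes \<Theta> :: "real \<Rightarrow> nat \<Rightarrow> real"
  assumes "compact S" and cont: "\<forall>m\<in>{1..pdim d H}. continuous_on S (\<lambda>s. \<Theta> s m)"
  shows "\<exists>T. \<forall>s\<in>S. \<forall>m\<in>{1..pdim d H}. \<bar>\<Theta> s m\<bar> \<le> T"
proof -
  have "continuous_on S (\<lambda>s. \<Sum>m = 1..pdim d H. \<bar>\<Theta> s m\<bar>)"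
    using cont by (intro continuous_intros) auto
  then have "bounded ((\<lambda>s. \<Sum>m = 1..pdim d H. \<bar>\<Theta> s m\<bar>) ` S)"
    using \<open>compact S\<close> by (intro compact_imp_bounded compact_continuous_image)
  then obtain T where T: "\<forall>s\<in>S. \<bar>\<Sum>m = 1..pdim d H. \<bar>\<Theta> s m\<bar>\<bar> \<le> T"
    unfolding bounded_iff by auto
  have "\<bar>\<Theta> s m\<bar> \<le> T" if "s \<in> S" "m \<in> {1..pdim d H}" for s m
    using member_le_sum[of m "{1..pdim d H}" "\<lambda>m. \<bar>\<Theta> s m\<bar>"] T that by force
  then show ?thesis
    by blast
qed

lemma continuous_on_NN_trajectory:
  fixes \<Theta> :: "real \<Rightarrow> nat \<Rightarrow> real"
  assumes cont: "\<forall>m\<in>{1..pdim d H}. continuous_on S (\<lambda>s. \<Theta> s m)"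
  shows "continuous_on S (\<lambda>s. NN d H (\<Theta> s) y)"
proof -
  have coord: "continuous_on S (\<lambda>s. \<Theta> s m)" if "m \<in> {1..pdim d H}" for m
    using cont that by blast
  have "continuous_on S (\<lambda>s. wt d (\<Theta> s) i j)" if "i \<in> {1..H}" "j \<in> {1..d}" for i j
    unfolding wt_def using coord parameter_indices(1)[OF that] by blast
  moreover have "continuous_on S (\<lambda>s. bt d H (\<Theta> s) i)" "continuous_on S (\<lambda>s. vt d H (\<Theta> s) i)"
    if "i \<in> {1..H}" for i
    unfolding bt_def vt_def using coord parameter_indices(2,3)[OF that] by blast+
  moreover have "continuous_on S (\<lambda>s. ct d H (\<Theta> s))"
    unfolding ct_def using coord by (simp add: pdim_eq)
  ultimately show ?thesis
    unfolding NN_def by (intro continuous_intros) auto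
qed

lemma continuous_on_risk_trajectory:
  fixes \<Theta> :: "real \<Rightarrow> nat \<Rightarrow> real"
  assumes "compact S" and cont: "\<forall>m\<in>{1..pdim d H}. continuous_on S (\<lambda>s. \<Theta> s m)"
  shows "continuous_on S (\<lambda>s. LL d H f \<mu> (\<Theta> s))"
    and "continuous_on S (\<lambda>s. \<integral>y. (f y - \<xi>) * (NN d H (\<Theta> s) y - f y) \<partial>\<mu>)"
proof -
  obtain T where "\<forall>s\<in>S. \<forall>m\<in>{1..pdim d H}. \<bar>\<Theta> s m\<bar> \<le> T"
    using bounded_trajectory[OF assms] by blast
  moreover obtain K where "\<forall>\<theta>. \<forall>y\<in>space \<mu>. (\<forall>m\<in>{1..pdim d H}. \<bar>\<theta> m\<bar> \<le> T) \<longrightarrow>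
      \<bar>f y\<bar> \<le> K \<and> \<bar>NN d H \<theta> y\<bar> \<le> K"
    using relu_bounded[of T] by blast
  ultimately have K: "\<bar>f y\<bar> \<le> K" "\<bar>NN d H (\<Theta> s) y\<bar> \<le> K" if "s \<in> S" "y \<in> space \<mu>" for s y
    using that by blast+
  show "continuous_on S (\<lambda>s. LL d H f \<mu> (\<Theta> s))"
    unfolding LL_def
  proof (rule continuous_on_integral[where K="(2 * K)\<^sup>2"])
    show "\<bar>(f y - NN d H (\<Theta> s) y)\<^sup>2\<bar> \<le> (2 * K)\<^sup>2" if "s \<in> S" "y \<in> space \<mu>" for s y
    proof -
      have "\<bar>f y - NN d H (\<Theta> s) y\<bar> \<le> 2 * K"
        using K[OF that] by linarith
      from power_mono[OF this abs_ge_zero, of 2] show ?thesis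
        by simp
    qed
  qed (auto intro!: continuous_intros continuous_on_NN_trajectory cont)
  show "continuous_on S (\<lambda>s. \<integral>y. (f y - \<xi>) * (NN d H (\<Theta> s) y - f y) \<partial>\<mu>)"
  proof (rule continuous_on_integral[where K="(K + \<bar>\<xi>\<bar>) * (2 * K)"])
    show "\<bar>(f y - \<xi>) * (NN d H (\<Theta> s) y - f y)\<bar> \<le> (K + \<bar>\<xi>\<bar>) * (2 * K)"
      if "s \<in> S" "y \<in> space \<mu>" for s y
      unfolding abs_mult using K[OF that] by (intro mult_mono) auto
  qed (auto intro!: continuous_intros continuous_on_NN_trajectory cont)
qed

lemma lyapunov_trajectory_identity:
  fixes \<Theta> g :: "real \<Rightarrow> nat \<Rightarrow> real"
  assumes t: "0 \<le> t"
    and cont: "\<forall>k\<in>{1..pdim d H}. continuous_on {0..t} (\<lambda>s. \<Theta> s k)"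
    and g: "\<And>s k. k \<in> {1..pdim d H} \<Longrightarrow> g s k = generalized_gradient (\<Theta> s) k"
    and g_int: "\<And>k. k \<in> {1..pdim d H} \<Longrightarrow> set_integrable lborel {0..t} (\<lambda>s. g s k)"
    and \<Theta>: "\<And>s k. s \<in> {0..t} \<Longrightarrow> k \<in> {1..pdim d H} \<Longrightarrow>
      \<Theta> s k = \<Theta> 0 k - (LINT u:{0..s}|lborel. g u k)"
  shows "(\<Sum>k = 1..pdim d H. (\<Theta> t k)\<^sup>2) + (ct d H (\<Theta> t) - 2 * \<xi>)\<^sup>2
    = (\<Sum>k = 1..pdim d H. (\<Theta> 0 k)\<^sup>2) + (ct d H (\<Theta> 0) - 2 * \<xi>)\<^sup>2
      - 8 * (LINT s:{0..t}|lborel. LL d H f \<mu> (\<Theta> s))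
      - 8 * (LINT s:{0..t}|lborel. \<integral>y. (f y - \<xi>) * (NN d H (\<Theta> s) y - f y) \<partial>\<mu>)"
proof -
  let ?P = "pdim d H" and ?V = "\<lambda>s. ct d H (\<Theta> s) - 2 * \<xi>"
  let ?C = "\<lambda>s. \<integral>y. (f y - \<xi>) * (NN d H (\<Theta> s) y - f y) \<partial>\<mu>"
  have P: "?P \<in> {1..?P}"
    by (simp add: pdim_eq)
  note coordinates = sum_power2_integral_equation[where K="{1..?P}" and x=\<Theta> and g=g, OF t g_int \<Theta>]
  have "?V s = ?V 0 - (LINT u:{0..s}|lborel. g u ?P)" if "s \<in> {0..t}" for s
    using \<Theta>[OF that P] by (simp add: ct_def)
  note bias = integral_equation_power2[OF t g_int[OF P] this]
  have "(\<Sum>k = 1..?P. \<Theta> s k * g s k) + ?V s * g s ?P = 4 * (LL d H f \<mu> (\<Theta> s) + ?C s)" for s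
    using lyapunov_gradient_identity[of "\<Theta> s" \<xi>] g P by simp
  then have "(LINT s:{0..t}|lborel. \<Sum>k = 1..?P. \<Theta> s k * g s k) + (LINT s:{0..t}|lborel. ?V s * g s ?P)
      = (LINT s:{0..t}|lborel. 4 * (LL d H f \<mu> (\<Theta> s) + ?C s))"
    using coordinates(1) bias(1) by (simp add: set_integral_add(2)[symmetric])
  also have "\<dots> = 4 * ((LINT s:{0..t}|lborel. LL d H f \<mu> (\<Theta> s)) + (LINT s:{0..t}|lborel. ?C s))"
    using continuous_on_risk_trajectory[OF compact_Icc cont]
    by (simp add: set_integral_add(2) borel_integrable_atLeastAtMost')
  finally show ?thesis
    using coordinates(2) bias(2) by simp
qed

lemma lyapunov_trajectory_bound:
  fixes \<Theta> :: "real \<Rightarrow> nat \<Rightarrow> real"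
  assumes cont: "\<forall>k\<in>{1..pdim d H}. continuous_on {0..t} (\<lambda>s. \<Theta> s k)"
  shows "- 8 * (LINT s:{0..t}|lborel. LL d H f \<mu> (\<Theta> s))
      - 8 * (LINT s:{0..t}|lborel. \<integral>y. (f y - \<xi>) * (NN d H (\<Theta> s) y - f y) \<partial>\<mu>)
    \<le> 4 * (LINT s:{0..t}|lborel. (\<integral>y. (f y - \<xi>)\<^sup>2 \<partial>\<mu>) - LL d H f \<mu> (\<Theta> s))"
proof -
  let ?L = "\<lambda>s. LL d H f \<mu> (\<Theta> s)" and ?C = "\<lambda>s. \<integral>y. (f y - \<xi>) * (NN d H (\<Theta> s) y - f y) \<partial>\<mu>"
  let ?Q = "\<integral>y. (f y - \<xi>)\<^sup>2 \<partial>\<mu>"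
  have L: "set_integrable lborel {0..t} ?L" and C: "set_integrable lborel {0..t} ?C"
    using continuous_on_risk_trajectory[OF compact_Icc cont]
    by (simp_all add: borel_integrable_atLeastAtMost')
  have Q: "set_integrable lborel {0..t} (\<lambda>_. ?Q)"
    by (simp add: borel_integrable_atLeastAtMost')
  have "(LINT s:{0..t}|lborel. - 8 * (?L s + ?C s)) \<le> (LINT s:{0..t}|lborel. 4 * (?Q - ?L s))"
  proof (rule set_integral_mono)
    show "set_integrable lborel {0..t} (\<lambda>s. - 8 * (?L s + ?C s))"
      using L C by (intro set_integrable_mult_right set_integral_add(1))
    show "set_integrable lborel {0..t} (\<lambda>s. 4 * (?Q - ?L s))"
      using Q L by (intro set_integrable_mult_right set_integral_diff(1))
    show "- 8 * (?L s + ?C s) \<le> 4 * (?Q - ?L s)" for s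
      using risk_cross_term_nonneg[of \<xi> "\<Theta> s"] by (simp add: algebra_simps)
  qed
  moreover have "(LINT s:{0..t}|lborel. - 8 * (?L s + ?C s))
      = - 8 * ((LINT s:{0..t}|lborel. ?L s) + (LINT s:{0..t}|lborel. ?C s))"
    using L C by (simp only: set_integral_mult_right set_integral_add(2))
  ultimately show ?thesis
    by (simp only: set_integral_mult_right) (simp add: algebra_simps)
qed

end

section \<open>Smooth approximations of ReLU\<close>

locale smooth_relu_approximation = relu_risk +
  fixes R :: "nat \<Rightarrow> real \<Rightarrow> real"
  assumes C1_R: "\<And>r. R r C1_differentiable_on UNIV"
    and R_tendsto_relu: "\<And>x. (\<lambda>r. \<bar>R r x - max x 0\<bar> + \<bar>deriv (R r) x - indicator {0<..} x\<bar>) \<longlonglongrightarrow> 0"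
    and deriv_R_bounded: "\<And>x. \<exists>C. \<forall>r. \<forall>y\<in>{-\<bar>x\<bar>..\<bar>x\<bar>}. \<bar>deriv (R r) y\<bar> \<le> C"
begin

lemma has_real_derivative_R: "(R r has_real_derivative deriv (R r) z) (at z)"
  using C1_R[of r] unfolding C1_differentiable_on_eq by (simp add: DERIV_deriv_iff_real_differentiable)

lemma measurable_R [measurable]: "R r \<in> borel_measurable borel"
  using has_real_derivative_R
  by (intro borel_measurable_continuous_onI continuous_at_imp_continuous_on) (blast intro: DERIV_isCont)

lemma measurable_deriv_R [measurable]: "deriv (R r) \<in> borel_measurable borel"
proof -
  have "vector_derivative (R r) (at x) = deriv (R r) x" for x
    using has_real_derivative_R[of r x]
    by (simp add: has_real_derivative_iff_has_vector_derivative vector_derivative_at)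
  then have "continuous_on UNIV (deriv (R r))"
    using C1_R[of r] unfolding C1_differentiable_on_eq by simp
  then show ?thesis
    by (rule borel_measurable_continuous_onI)
qed

lemma tendsto_R: "(\<lambda>r. R r x) \<longlonglongrightarrow> max x 0" and tendsto_deriv_R: "(\<lambda>r. deriv (R r) x) \<longlonglongrightarrow> indicator {0<..} x"
  by (rule LIM_zero_cancel, rule Lim_null_comparison[OF _ R_tendsto_relu[of x]], simp)+

text \<open>Pointwise convergence bounds \<open>R r 0\<close>, and the mean value theorem does the rest.\<close>
lemma R_uniformly_bounded: "\<exists>C. \<forall>r z. \<bar>z\<bar> \<le> U \<longrightarrow> \<bar>R r z\<bar> \<le> C \<and> \<bar>deriv (R r) z\<bar> \<le> C"
proof -
  obtain C where C: "\<And>r y. y \<in> {-\<bar>U\<bar>..\<bar>U\<bar>} \<Longrightarrow> \<bar>deriv (R r) y\<bar> \<le> C"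
    using deriv_R_bounded[of U] by blast
  obtain K where K: "\<And>r. \<bar>R r 0\<bar> \<le> K"
    using convergent_imp_Bseq[OF convergentI[OF tendsto_R[of 0]]] unfolding Bseq_def by auto
  have R_bound: "\<bar>R r z\<bar> \<le> K + C * \<bar>U\<bar>" if z: "\<bar>z\<bar> \<le> U" for r z
  proof -
    have "norm (R r z - R r 0) \<le> C * norm (z - 0)"
      using z C has_real_derivative_R
      by (intro field_differentiable_bound[where S="{-\<bar>U\<bar>..\<bar>U\<bar>}" and f'="deriv (R r)"])
        (auto intro: has_field_derivative_at_within)
    moreover have "0 \<le> C"
      using C[of 0 r] by simp
    then have "C * \<bar>z\<bar> \<le> C * \<bar>U\<bar>"
      using z by (intro mult_left_mono) auto
    ultimately show ?thesis
      using K[of r] by simp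
  qed
  show ?thesis
  proof (intro exI allI impI conjI)
    fix r z assume z: "\<bar>z\<bar> \<le> U"
    show "\<bar>R r z\<bar> \<le> max (K + C * \<bar>U\<bar>) C"
      using R_bound[OF z] by (simp add: le_max_iff_disj)
    show "\<bar>deriv (R r) z\<bar> \<le> max (K + C * \<bar>U\<bar>) C"
      using C[of z r] z by (simp add: abs_le_iff le_max_iff_disj)
  qed
qed

lemma R_realization_bounded_near:
  "\<exists>K. \<forall>r s y. \<bar>s\<bar> \<le> 1 \<longrightarrow> y \<in> space \<mu> \<longrightarrow>
    \<bar>f y - realization d H (R r) (\<theta>(k := \<theta> k + s)) y\<bar> \<le> K \<and>
    \<bar>realization_partial d H (R r) (deriv (R r)) (\<theta>(k := \<theta> k + s)) k y\<bar> \<le> K"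
proof -
  obtain K where K: "\<forall>r \<theta>' k. \<forall>y\<in>space \<mu>. (\<forall>m\<in>{1..pdim d H}. \<bar>\<theta>' m\<bar> \<le> 1 + (\<Sum>m = 1..pdim d H. \<bar>\<theta> m\<bar>)) \<longrightarrow>
      \<bar>f y\<bar> \<le> K \<and> \<bar>realization d H (R r) \<theta>' y\<bar> \<le> K \<and>
      \<bar>realization_partial d H (R r) (deriv (R r)) \<theta>' k y\<bar> \<le> K"
    using realization_bounded[OF R_uniformly_bounded] by blast
  show ?thesis
  proof (intro exI allI impI conjI)
    fix r :: nat and s :: real and y assume "\<bar>s\<bar> \<le> 1" "y \<in> space \<mu>"
    then have "\<bar>f y\<bar> \<le> K \<and> \<bar>realization d H (R r) (\<theta>(k := \<theta> k + s)) y\<bar> \<le> K \<and>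
        \<bar>realization_partial d H (R r) (deriv (R r)) (\<theta>(k := \<theta> k + s)) k y\<bar> \<le> K"
      using K abs_update_le_sum_abs by blast
    then show "\<bar>f y - realization d H (R r) (\<theta>(k := \<theta> k + s)) y\<bar> \<le> 2 * K"
      "\<bar>realization_partial d H (R r) (deriv (R r)) (\<theta>(k := \<theta> k + s)) k y\<bar> \<le> 2 * K"
      by linarith+
  qed
qed

definition LLr_gradient :: "nat \<Rightarrow> (nat \<Rightarrow> real) \<Rightarrow> nat \<Rightarrow> real" where
  "LLr_gradient r \<theta> k = (\<integral>y. 2 * (f y - realization d H (R r) \<theta> y)
     * - realization_partial d H (R r) (deriv (R r)) \<theta> k y \<partial>\<mu>)"

lemma is_gradient_LLr: "is_gradient (pdim d H) (LLr d H f \<mu> (R r)) \<theta> (LLr_gradient r \<theta>)"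
  unfolding is_gradient_def
proof
  fix k
  let ?\<theta> = "\<lambda>h. \<theta>(k := \<theta> k + h)"
  define F where "F = (\<lambda>h y. (f y - realization d H (R r) (?\<theta> h) y)\<^sup>2)"
  define F' where "F' = (\<lambda>h y. 2 * (f y - realization d H (R r) (?\<theta> h) y)
    * - realization_partial d H (R r) (deriv (R r)) (?\<theta> h) k y)"
  obtain K where K: "\<And>s y. \<bar>s\<bar> \<le> 1 \<Longrightarrow> y \<in> space \<mu> \<Longrightarrow>
      \<bar>f y - realization d H (R r) (?\<theta> s) y\<bar> \<le> K \<and>
      \<bar>realization_partial d H (R r) (deriv (R r)) (?\<theta> s) k y\<bar> \<le> K"
    using R_realization_bounded_near by blast
  have "((\<lambda>h. \<integral>y. F h y \<partial>\<mu>) has_real_derivative (\<integral>y. F' 0 y \<partial>\<mu>)) (at 0)"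
  proof (rule has_real_derivative_integral[where K="2 * (K * K)"])
    show meas: "F h \<in> borel_measurable \<mu>" for h
      unfolding F_def by measurable
    show "F' 0 \<in> borel_measurable \<mu>"
      unfolding F'_def by measurable
    show "((\<lambda>h. F h y) has_real_derivative F' s y) (at s)" for y s
      unfolding F_def F'_def
      by (rule derivative_eq_intros has_real_derivative_realization[OF has_real_derivative_R] refl)+ simp
    show "\<bar>F' s y\<bar> \<le> 2 * (K * K)" if "y \<in> space \<mu>" "\<bar>s\<bar> \<le> 1" for y s
      unfolding F'_def abs_mult abs_minus_cancel mult.assoc using K[OF that(2,1)]
      by (intro mult_left_mono mult_mono) auto
    show "integrable \<mu> (F 0)"
    proof (rule integrable_bounded_image[OF meas])
      have "\<bar>F 0 y\<bar> \<le> K\<^sup>2" if "y \<in> space \<mu>" for y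
        using power_mono[OF conjunct1[OF K[of 0 y]] abs_ge_zero, of 2] that by (simp add: F_def)
      then show "bounded (F 0 ` space \<mu>)"
        unfolding bounded_iff by auto
    qed
  qed
  then show "((\<lambda>h. LLr d H f \<mu> (R r) (?\<theta> h)) has_real_derivative LLr_gradient r \<theta> k) (at 0)"
    by (simp add: LLr_eq_integral_realization LLr_gradient_def F_def F'_def)
qed

lemma LLr_gradient_tendsto: "(\<lambda>r. LLr_gradient r \<theta> k) \<longlonglongrightarrow> generalized_gradient \<theta> k"
proof -
  let ?P = "\<lambda>r. realization d H (R r) \<theta>" and ?D = "\<lambda>r. realization_partial d H (R r) (deriv (R r)) \<theta> k"
  obtain K where K0: "\<forall>r s y. \<bar>s\<bar> \<le> 1 \<longrightarrow> y \<in> space \<mu> \<longrightarrow>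
      \<bar>f y - realization d H (R r) (\<theta>(k := \<theta> k + s)) y\<bar> \<le> K \<and>
      \<bar>realization_partial d H (R r) (deriv (R r)) (\<theta>(k := \<theta> k + s)) k y\<bar> \<le> K"
    using R_realization_bounded_near by blast
  have K: "\<bar>f y - ?P r y\<bar> \<le> K \<and> \<bar>?D r y\<bar> \<le> K" if "y \<in> space \<mu>" for r y
    using K0[rule_format, where s=0] that by simp
  show ?thesis
    unfolding LLr_gradient_def generalized_gradient_def
  proof (rule integral_dominated_convergence[where w="\<lambda>_. 2 * (K * K)"])
    show "AE y in \<mu>. (\<lambda>r. 2 * (f y - ?P r y) * - ?D r y)
        \<longlonglongrightarrow> 2 * (f y - NN d H \<theta> y) * - NN_partial d H \<theta> k y"
      unfolding NN_eq_realization realization_def realization_partial_def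
      by (intro AE_I2 tendsto_intros tendsto_R tendsto_deriv_R)
    show "AE y in \<mu>. norm (2 * (f y - ?P r y) * - ?D r y) \<le> 2 * (K * K)" for r
    proof (rule AE_I2)
      fix y assume "y \<in> space \<mu>"
      then show "norm (2 * (f y - ?P r y) * - ?D r y) \<le> 2 * (K * K)"
        unfolding real_norm_def abs_mult abs_minus_cancel mult.assoc using K[of y r]
        by (intro mult_left_mono mult_mono) auto
    qed
    show "(\<lambda>y. 2 * (f y - NN d H \<theta> y) * - NN_partial d H \<theta> k y) \<in> borel_measurable \<mu>"
      by measurable
    show "(\<lambda>y. 2 * (f y - ?P r y) * - ?D r y) \<in> borel_measurable \<mu>" for r
      by measurable
  qed simp
qed

lemma G_eq_generalized_gradient:
  fixes G :: "(nat \<Rightarrow> real) \<Rightarrow> nat \<Rightarrow> real"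
  assumes G: "\<And>\<theta> g l. (\<forall>r. is_gradient (pdim d H) (LLr d H f \<mu> (R r)) \<theta> (g r)) \<Longrightarrow>
      (\<forall>k\<in>{1..pdim d H}. (\<lambda>r. g r k) \<longlonglongrightarrow> l k) \<Longrightarrow> (\<forall>k\<in>{1..pdim d H}. G \<theta> k = l k)"
  shows "k \<in> {1..pdim d H} \<Longrightarrow> G \<theta> k = generalized_gradient \<theta> k"
  using G[of \<theta> "\<lambda>r. LLr_gradient r \<theta>" "generalized_gradient \<theta>"] is_gradient_LLr LLr_gradient_tendsto
  by blast

end

theorem proposition4p1:
  fixes d H :: nat and a b \<xi> :: real
    and f :: "(nat \<Rightarrow> real) \<Rightarrow> real"
    and R :: "nat \<Rightarrow> real \<Rightarrow> real"
    and \<mu> :: "(nat \<Rightarrow> real) measure"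
    and G :: "(nat \<Rightarrow> real) \<Rightarrow> (nat \<Rightarrow> real)"
    and V :: "(nat \<Rightarrow> real) \<Rightarrow> real"
    and \<Theta> :: "real \<Rightarrow> (nat \<Rightarrow> real)"
    and t :: real
  assumes d_pos: "d \<ge> 1" and H_pos: "H \<ge> 1" and ab: "a < b"
    and f_cont: "continuous_on (PiE {1..d} (\<lambda>_. {a..b})) f"
    and R_C1: "\<And>r. R r C1_differentiable_on UNIV"
    and R_lim: "\<And>x. (\<lambda>r. \<bar>R r x - max x 0\<bar> + \<bar>deriv (R r) x - indicator {0<..} x\<bar>) \<longlonglongrightarrow> 0"
    and R_bdd: "\<And>x. \<exists>C. \<forall>r. \<forall>y\<in>{-\<bar>x\<bar>..\<bar>x\<bar>}. \<bar>deriv (R r) y\<bar> \<le> C"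
    and \<mu>_sets: "sets \<mu> = sets (Pi\<^sub>M {1..d} (\<lambda>_. restrict_space lborel {a..b}))"
    and \<mu>_fin: "finite_measure \<mu>"
    and G_def: "\<And>\<theta> g l. (\<forall>r. is_gradient (pdim d H) (LLr d H f \<mu> (R r)) \<theta> (g r)) \<Longrightarrow>
        (\<forall>k\<in>{1..pdim d H}. (\<lambda>r. g r k) \<longlonglongrightarrow> l k) \<Longrightarrow>
        (\<forall>k\<in>{1..pdim d H}. G \<theta> k = l k)"
    and V_def: "\<And>\<theta>. V \<theta> = (pnorm d H \<theta>)\<^sup>2 + \<bar>ct d H \<theta> - 2 * \<xi>\<bar>\<^sup>2"
    and \<Theta>_cont: "\<forall>k\<in>{1..pdim d H}. continuous_on {0..} (\<lambda>s. \<Theta> s k)"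
    and \<Theta>_int: "\<And>s k. s \<ge> 0 \<Longrightarrow> k \<in> {1..pdim d H} \<Longrightarrow>
        set_integrable lborel {0..s} (\<lambda>u. G (\<Theta> u) k)"
    and \<Theta>_eq: "\<And>s k. s \<ge> 0 \<Longrightarrow> k \<in> {1..pdim d H} \<Longrightarrow>
        \<Theta> s k = \<Theta> 0 k - (LINT u:{0..s}|lborel. G (\<Theta> u) k)"
    and t_nonneg: "t \<ge> 0"
  shows "V (\<Theta> t) = V (\<Theta> 0) - 8 * (LINT s:{0..t}|lborel. LL d H f \<mu> (\<Theta> s))
            - 8 * (LINT s:{0..t}|lborel. (\<integral>x. (f x - \<xi>) * (NN d H (\<Theta> s) x - f x) \<partial>\<mu>))
       \<and> V (\<Theta> 0) - 8 * (LINT s:{0..t}|lborel. LL d H f \<mu> (\<Theta> s))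
            - 8 * (LINT s:{0..t}|lborel. (\<integral>x. (f x - \<xi>) * (NN d H (\<Theta> s) x - f x) \<partial>\<mu>))
         \<le> V (\<Theta> 0) + 4 * (LINT s:{0..t}|lborel. (\<integral>x. (f x - \<xi>)\<^sup>2 \<partial>\<mu>) - LL d H f \<mu> (\<Theta> s))"
proof -
  interpret smooth_relu_approximation d H a b f \<mu> R
    by (intro smooth_relu_approximation.intro relu_risk.intro smooth_relu_approximation_axioms.intro)
      (fact f_cont \<mu>_sets \<mu>_fin R_C1 R_lim R_bdd)+
  have cont: "\<forall>k\<in>{1..pdim d H}. continuous_on {0..t} (\<lambda>s. \<Theta> s k)"
    using \<Theta>_cont by (auto intro: continuous_on_subset)
  have V: "V \<theta> = (\<Sum>k = 1..pdim d H. (\<theta> k)\<^sup>2) + (ct d H \<theta> - 2 * \<xi>)\<^sup>2" for \<theta>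
    by (simp add: V_def pnorm_def sum_nonneg)
  have "V (\<Theta> t) = V (\<Theta> 0) - 8 * (LINT s:{0..t}|lborel. LL d H f \<mu> (\<Theta> s))
      - 8 * (LINT s:{0..t}|lborel. (\<integral>x. (f x - \<xi>) * (NN d H (\<Theta> s) x - f x) \<partial>\<mu>))"
    unfolding V
  proof (rule lyapunov_trajectory_identity[where g="\<lambda>s k. G (\<Theta> s) k", OF t_nonneg cont])
    show "G (\<Theta> s) k = generalized_gradient (\<Theta> s) k" if "k \<in> {1..pdim d H}" for s k
      using G_eq_generalized_gradient[OF G_def that] .
    show "set_integrable lborel {0..t} (\<lambda>s. G (\<Theta> s) k)" if "k \<in> {1..pdim d H}" for k
      using \<Theta>_int[OF t_nonneg that] .
    show "\<Theta> s k = \<Theta> 0 k - (LINT u:{0..s}|lborel. G (\<Theta> u) k)"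
      if "s \<in> {0..t}" "k \<in> {1..pdim d H}" for s k
      using that by (intro \<Theta>_eq) auto
  qed
  with lyapunov_trajectory_bound[OF cont, of \<xi>] show ?thesis
    by simp
qed

end
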